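(* Let $p,q\in\mathbb{N}$ be coprime, $k\in\mathbb{N}$ squarefree, $m=-pk$, $n=qk$, and let $T$ be the torsion subgroup of $E(m,n)(\mathbb{Q})$, where $E(m,n)$ is the elliptic curve $y^2=x(x+m)(x+n)$. (i) If $T\cong\mathbb{Z}/2\times\mathbb{Z}/4$ or $T\cong\mathbb{Z}/2\times\mathbb{Z}/8$, then $k=1$. (ii) If $T\cong\mathbb{Z}/2\times\mathbb{Z}/6$, then $k=1$ or $k=3$.
   Context: $E(m,n)$ is the elliptic curve $y^2=x(x+m)(x+n)$ over $\mathbb{Q}$ with neutral element the point at infinity. *)

theory Defs
  imports "HOL-Algebra.Algebra" "HOL-Computational_Algebra.Squarefree"
begin

text \<open>Rational points of E(m,n): y^2 = x(x+m)(x+n) = x^3 + (m+n) x^2 + m n x.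
  Points are represented as (rat \<times> rat) option, None being the point at infinity.\<close>

definition on_curve :: "int \<Rightarrow> int \<Rightarrow> rat \<times> rat \<Rightarrow> bool" where
  "on_curve m n P = (case P of (x, y) \<Rightarrow>
      y^2 = x * (x + of_int m) * (x + of_int n))"

definition ec_add :: "int \<Rightarrow> int \<Rightarrow> (rat \<times> rat) option \<Rightarrow> (rat \<times> rat) option \<Rightarrow> (rat \<times> rat) option" where
  "ec_add m n P Q = (case P of None \<Rightarrow> Q | Some (x1, y1) \<Rightarrow>
     (case Q of None \<Rightarrow> P | Some (x2, y2) \<Rightarrow>
       (if x1 = x2 \<and> y1 = - y2 then None
        else
          (let a2 = of_int (m + n); a4 = of_int (m * n);
               l = (if x1 = x2 then (3 * x1^2 + 2 * a2 * x1 + a4) / (2 * y1)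
                    else (y2 - y1) / (x2 - x1));
               x3 = l^2 - a2 - x1 - x2;
               y3 = l * (x1 - x3) - y1
           in Some (x3, y3)))))"

definition E_group :: "int \<Rightarrow> int \<Rightarrow> (rat \<times> rat) option monoid" where
  "E_group m n = \<lparr> carrier = insert None (Some ` {P. on_curve m n P}),
                   monoid.mult = ec_add m n, one = None \<rparr>"

definition torsion_points :: "int \<Rightarrow> int \<Rightarrow> (rat \<times> rat) option set" where
  "torsion_points m n = {P \<in> carrier (E_group m n).
      \<exists>k::nat. k > 0 \<and> P [^]\<^bsub>E_group m n\<^esub> k = \<one>\<^bsub>E_group m n\<^esub>}"

definition E_torsion :: "int \<Rightarrow> int \<Rightarrow> (rat \<times> rat) option monoid" where
  "E_torsion m n = (E_group m n)\<lparr>carrier := torsion_points m n\<rparr>"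

end

theory Submission
  imports Defs
begin

(* Let m = -pk, n = qk and let T be the torsion subgroup of E(m,n)(Q), assumed isomorphic to
   Z/2 x Z/N through some phi.
   (i) N = 4 or 8: Z/N has an element of order four, so T contains a point P = (x, y), y <> 0,
       whose double is a 2-torsion point (e, 0).  Two-descent (x(2P) - e_i is a square for each
       root e_i) shows that e, e + m, e + n are squares; the sign pattern m < 0 < n forces
       e = -m = pk, so pk and (p + q)k are integer squares and a prime dividing the squarefree
       k would divide both p and q.
   (ii) N = 6: T contains P with 2P = -P.  Then x(P) is a root of the 3-division quartic, and
       since P = 2(-P) also x, x + m, x + n are squares.  Writing x = k s/t in lowest terms, the
       rational root test gives t | 3, and every prime l <> 3 of k divides s, p and q.
   Defs only provides the chord-tangent formulas, not a proof that they form a group, so to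
   transport points along phi we need that doubling keeps torsion points torsion.  This follows
   from the special associativity law Z + 2P = (Z + P) + P, proved for an arbitrary nonsingular
   curve y^2 = x^3 + a x^2 + b x + c by translating P to (0, w) and computing explicitly. *)

definition wadd :: "rat \<Rightarrow> rat \<Rightarrow> (rat \<times> rat) option \<Rightarrow> (rat \<times> rat) option \<Rightarrow> (rat \<times> rat) option" where
  "wadd a b P Q = (case P of None \<Rightarrow> Q | Some (x1, y1) \<Rightarrow>
     (case Q of None \<Rightarrow> P | Some (x2, y2) \<Rightarrow>
       (if x1 = x2 \<and> y1 = - y2 then None
        else
          (let l = (if x1 = x2 then (3 * x1^2 + 2 * a * x1 + b) / (2 * y1)
                    else (y2 - y1) / (x2 - x1));
               x3 = l^2 - a - x1 - x2
           in Some (x3, l * (x1 - x3) - y1)))))"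

definition wpoints :: "rat \<Rightarrow> rat \<Rightarrow> rat \<Rightarrow> (rat \<times> rat) option set" where
  "wpoints a b c = insert None (Some ` {(x, y). y^2 = x^3 + a*x^2 + b*x + c})"

lemma wadd_None_left [simp]: "wadd a b None Q = Q"
  by (simp add: wadd_def)

lemma wadd_None_right [simp]: "wadd a b P None = P"
  by (cases P) (auto simp: wadd_def)

lemma wpoints_Some [simp]: "Some (x, y) \<in> wpoints a b c \<longleftrightarrow> y^2 = x^3 + a*x^2 + b*x + c"
  by (auto simp: wpoints_def)

lemma wpoints_None [simp]: "None \<in> wpoints a b c"
  by (simp add: wpoints_def)

lemma wadd_opposite: "x1 = x2 \<Longrightarrow> y1 = - y2 \<Longrightarrow> wadd a b (Some (x1, y1)) (Some (x2, y2)) = None"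
  by (simp add: wadd_def)

lemma wadd_tangent:
  "y \<noteq> 0 \<Longrightarrow> l = (3*x^2 + 2*a*x + b) / (2*y) \<Longrightarrow>
   wadd a b (Some (x, y)) (Some (x, y)) = Some (l^2 - (a + x + x), l * (x - (l^2 - (a + x + x))) - y)"
  by (simp add: wadd_def Let_def diff_diff_eq)

lemma wadd_chord:
  "x1 \<noteq> x2 \<Longrightarrow> l = (y2 - y1) / (x2 - x1) \<Longrightarrow>
   wadd a b (Some (x1, y1)) (Some (x2, y2)) = Some (l^2 - (a + x1 + x2), l * (x1 - (l^2 - (a + x1 + x2))) - y1)"
  by (simp add: wadd_def Let_def diff_diff_eq)

definition tangent_slope :: "rat \<Rightarrow> rat \<Rightarrow> rat \<Rightarrow> rat \<Rightarrow> rat" where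
  "tangent_slope a b x y = (3*x^2 + 2*a*x + b) / (2*y)"

lemma wadd_Some:
  "wadd a b (Some (x1, y1)) (Some (x2, y2)) = (if x1 = x2 \<and> y1 = -y2 then None else
     (let l = (if x1 = x2 then tangent_slope a b x1 y1 else (y2 - y1) / (x2 - x1))
      in Some (l^2 - a - x1 - x2, l * (x1 - (l^2 - a - x1 - x2)) - y1)))"
  by (simp add: wadd_def tangent_slope_def Let_def)

lemma wadd_commute:
  assumes "Some (x1, y1) \<in> wpoints a b c" and "Some (x2, y2) \<in> wpoints a b c"
  shows "wadd a b (Some (x1, y1)) (Some (x2, y2)) = wadd a b (Some (x2, y2)) (Some (x1, y1))"
proof (cases "x1 = x2")
  case True
  hence "y1^2 = y2^2" using assms by simp
  hence "y1 = y2 \<or> y1 = -y2" by (simp add: power2_eq_iff)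
  thus ?thesis using True by (auto simp: wadd_def)
next
  case False
  define l where "l = (y2 - y1) / (x2 - x1)"
  have l': "l = (y1 - y2) / (x1 - x2)" using False by (simp add: l_def field_simps)
  have "l * (x1 - x2) = y1 - y2" using False by (simp add: l_def field_simps)
  hence y: "l * (x1 - (l^2 - (a + x1 + x2))) - y1 = l * (x2 - (l^2 - (a + x1 + x2))) - y2"
    by (simp add: algebra_simps)
  have sum: "a + x2 + x1 = a + x1 + x2" by simp
  have "x2 \<noteq> x1" using False by simp
  note flipped = wadd_chord[OF this l', of a b, unfolded sum]
  show ?thesis unfolding flipped wadd_chord[OF False l_def] y ..
qed

definition wneg :: "(rat \<times> rat) option \<Rightarrow> (rat \<times> rat) option" where
  "wneg P = map_option (\<lambda>(x, y). (x, -y)) P"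

lemma wneg_simps [simp]: "wneg None = None" "wneg (Some (x, y)) = Some (x, -y)"
  by (simp_all add: wneg_def)

lemma wneg_wpoints: "P \<in> wpoints a b c \<Longrightarrow> wneg P \<in> wpoints a b c"
  by (cases P) auto

lemma wadd_wneg: "wadd a b (wneg P) (wneg Q) = wneg (wadd a b P Q)"
proof (cases "P = None \<or> Q = None")
  case False
  then obtain x1 y1 x2 y2 where "P = Some (x1, y1)" "Q = Some (x2, y2)" by auto
  moreover have "tangent_slope a b x (-y) = - tangent_slope a b x y" for x y
    by (simp add: tangent_slope_def)
  moreover have "(y1 - y2) / (x2 - x1) = - ((y2 - y1) / (x2 - x1))"
    by (simp add: minus_divide_left)
  ultimately show ?thesis by (auto simp: wadd_Some Let_def)
qed auto

lemma wadd_wneg_self: "wadd a b P (wneg P) = None"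
  by (cases P) (auto simp: wadd_Some)

text \<open>Translation x \<mapsto> x - h moves the curve y^2 = f(x) to y^2 = f(x + h) and commutes
  with the chord-tangent law; this lets us put any given point at x = 0.\<close>

definition wshift :: "rat \<Rightarrow> (rat \<times> rat) option \<Rightarrow> (rat \<times> rat) option" where
  "wshift h P = map_option (\<lambda>(x, y). (x - h, y)) P"

lemma wshift_simps [simp]: "wshift h None = None" "wshift h (Some (x, y)) = Some (x - h, y)"
  by (simp_all add: wshift_def)

lemma wshift_inj: "wshift h P = wshift h Q \<Longrightarrow> P = Q"
  by (cases P; cases Q) auto

lemma wshift_wshift [simp]: "wshift (-h) (wshift h P) = P"
  by (cases P) auto

lemma wpoints_wshift:
  assumes "P \<in> wpoints a b c"
  shows "wshift h P \<in> wpoints (a + 3*h) (b + 2*a*h + 3*h^2) (h^3 + a*h^2 + b*h + c)"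
proof (cases P)
  case (Some p)
  obtain x y where "p = (x, y)" by (cases p)
  moreover have "x^3 + a*x^2 + b*x + c = (x - h)^3 + (a + 3*h)*(x - h)^2 + (b + 2*a*h + 3*h^2)*(x - h)
      + (h^3 + a*h^2 + b*h + c)"
    by (simp add: algebra_simps power2_eq_square power3_eq_cube)
  ultimately show ?thesis using assms Some by simp
qed simp

lemma tangent_slope_wshift: "tangent_slope (a + 3*h) (b + 2*a*h + 3*h^2) (x - h) y = tangent_slope a b x y"
proof -
  have "3*(x - h)^2 + 2*(a + 3*h)*(x - h) + (b + 2*a*h + 3*h^2) = 3*x^2 + 2*a*x + b"
    by (simp add: algebra_simps power2_eq_square)
  thus ?thesis unfolding tangent_slope_def by simp
qed

lemma wadd_wshift: "wadd (a + 3*h) (b + 2*a*h + 3*h^2) (wshift h P) (wshift h Q) = wshift h (wadd a b P Q)"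
proof (cases "P = None \<or> Q = None")
  case False
  then obtain x1 y1 x2 y2 where "P = Some (x1, y1)" "Q = Some (x2, y2)" by auto
  moreover have "x1 - h = x2 - h \<longleftrightarrow> x1 = x2" by auto
  moreover have "l^2 - (a + 3*h) - (x1 - h) - (x2 - h) = (l^2 - a - x1 - x2) - h" for l
    by (simp add: algebra_simps)
  moreover have "l * (x1 - h - ((l^2 - a - x1 - x2) - h)) - y1 = l * (x1 - (l^2 - a - x1 - x2)) - y1" for l
    by (simp add: algebra_simps)
  moreover have "(y2 - y1) / ((x2 - h) - (x1 - h)) = (y2 - y1) / (x2 - x1)" by simp
  ultimately show ?thesis
    by (simp only: wshift_simps wadd_Some tangent_slope_wshift Let_def split: if_splits) auto
qed auto

text \<open>Two points given by chord-type formulas with slopes N1/D1 and N2/D2 coincide as soon as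
  the cross-multiplied (polynomial) identities hold; this turns point identities into ring
  identities that the simplifier can check.\<close>

lemma fraction_points_eq:
  fixes N1 D1 N2 D2 c1 c2 p1 p2 q1 q2 :: rat
  assumes D1: "D1 \<noteq> 0" and D2: "D2 \<noteq> 0"
    and hx: "N1^2 * D2^2 - c1 * D1^2 * D2^2 = N2^2 * D1^2 - c2 * D1^2 * D2^2"
    and hy: "N1 * (p1*D1^2 - N1^2 + c1*D1^2) * D2 - q1*D1^3*D2
             = N2 * (p2*D1^2 - N1^2 + c1*D1^2) * D1 - q2*D1^3*D2"
  shows "Some ((N1/D1)^2 - c1, (N1/D1) * (p1 - ((N1/D1)^2 - c1)) - q1) =
         Some ((N2/D2)^2 - c2, (N2/D2) * (p2 - ((N2/D2)^2 - c2)) - q2)"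
proof -
  have "(N1/D1)^2 - c1 = (N1^2 * D2^2 - c1 * D1^2 * D2^2) / (D1^2 * D2^2)"
    and "(N2/D2)^2 - c2 = (N2^2 * D1^2 - c2 * D1^2 * D2^2) / (D1^2 * D2^2)"
    using D1 D2 by (simp_all add: field_simps power2_eq_square)
  hence x: "(N1/D1)^2 - c1 = (N2/D2)^2 - c2" using hx by simp
  have "(N1/D1) * (p1 - ((N1/D1)^2 - c1)) - q1
      = (N1 * (p1*D1^2 - N1^2 + c1*D1^2) * D2 - q1*D1^3*D2) / (D1^3 * D2)"
    and "(N2/D2) * (p2 - ((N1/D1)^2 - c1)) - q2
      = (N2 * (p2*D1^2 - N1^2 + c1*D1^2) * D1 - q2*D1^3*D2) / (D1^3 * D2)"
    using D1 D2 by (simp_all add: field_simps power2_eq_square power3_eq_cube)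
  hence "(N1/D1) * (p1 - ((N1/D1)^2 - c1)) - q1 = (N2/D2) * (p2 - ((N1/D1)^2 - c1)) - q2"
    using hy by simp
  thus ?thesis by (simp only: x)
qed

text \<open>Base-point normal form: on y^2 = x^3 + a x^2 + b x + w^2 the point P = (0, w) lies at
  x = 0.  Every other affine point (x0, y0) with x0 \<noteq> 0 is written as (x0, w + v x0), v being
  the slope of the line through P; the curve equation then becomes linear in b.\<close>

lemma base_line_on_curve:
  assumes "x0 \<noteq> 0"
  shows "Some (x0, w + v*x0) \<in> wpoints a b (w^2) \<longleftrightarrow> b = 2*w*v + x0*(v^2 - (a + x0))"
proof -
  have "Some (x0, w + v*x0) \<in> wpoints a b (w^2)
      \<longleftrightarrow> (w + v*x0)^2 - (x0^3 + a*x0^2 + b*x0 + w^2) = 0"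
    unfolding wpoints_Some by (rule eq_iff_diff_eq_0)
  also have "(w + v*x0)^2 - (x0^3 + a*x0^2 + b*x0 + w^2) = x0 * (2*w*v + x0*(v^2 - (a + x0)) - b)"
    by (simp add: algebra_simps power2_eq_square power3_eq_cube)
  finally show ?thesis using assms by auto
qed

lemma base_double:
  assumes "w \<noteq> 0" and "b = 2*w*lam"
  shows "wadd a b (Some (0, w)) (Some (0, w)) = Some (lam^2 - a, -lam*(lam^2 - a) - w)"
proof -
  have "lam = (3*0^2 + 2*a*0 + b) / (2*w)" using assms by simp
  from wadd_tangent[OF assms(1) this] show ?thesis by (simp add: algebra_simps)
qed

lemma base_double_on_curve:
  assumes "b = 2*w*lam"
  shows "Some (lam^2 - a, -lam*(lam^2 - a) - w) \<in> wpoints a b (w^2)"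
  using assms by (simp add: algebra_simps power2_eq_square power3_eq_cube)

lemma base_chord:
  assumes "x0 \<noteq> 0"
  shows "wadd a b (Some (x0, w + v*x0)) (Some (0, w))
       = Some (v^2 - (a + x0), v*(x0 - (v^2 - (a + x0))) - (w + v*x0))"
proof -
  have "wadd a b (Some (x0, w + v*x0)) (Some (0, w))
      = Some (v^2 - (a + x0 + 0), v*(x0 - (v^2 - (a + x0 + 0))) - (w + v*x0))"
    by (rule wadd_chord) (use assms in simp_all)
  thus ?thesis by simp
qed

lemma base_chord_left:
  assumes "x0 \<noteq> 0"
  shows "wadd a b (Some (0, w)) (Some (x0, w + v*x0)) = Some (v^2 - (a + x0), -v*(v^2 - (a + x0)) - w)"
proof -
  have "wadd a b (Some (0, w)) (Some (x0, w + v*x0))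
      = Some (v^2 - (a + 0 + x0), v*(0 - (v^2 - (a + 0 + x0))) - w)"
    by (rule wadd_chord) (use assms in simp_all)
  thus ?thesis by (simp only: add_0_right diff_0 minus_mult_left mult_minus_right)
qed

lemma base_chord_on_curve:
  assumes "b = 2*w*v + x0*s" and "s = v^2 - (a + x0)"
  shows "Some (s, -v*s - w) \<in> wpoints a b (w^2)"
proof -
  have "(-v*s - w)^2 - (s^3 + a*s^2 + b*s + w^2) = s^2 * (v^2 - (a + x0) - s)"
    unfolding assms(1) by (simp add: algebra_simps power2_eq_square power3_eq_cube)
  thus ?thesis using assms(2) by simp
qed

lemma wadd_base_closed:
  assumes "Q \<in> wpoints a b (w^2)"
  shows "wadd a b (Some (0, w)) Q \<in> wpoints a b (w^2)"
proof (cases Q)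
  case (Some q)
  then obtain x0 y0 where Q: "Q = Some (x0, y0)" by (cases q) auto
  have cu: "y0^2 = x0^3 + a*x0^2 + b*x0 + w^2" using assms Q by simp
  show ?thesis
  proof (cases "x0 = 0")
    case True
    hence "y0 = w \<or> y0 = -w" using cu by (simp add: power2_eq_iff)
    moreover have "wadd a b (Some (0, w)) (Some (0, w)) \<in> wpoints a b (w^2)"
    proof (cases "w = 0")
      case False
      show ?thesis using base_double[OF False, of b "b/(2*w)"] base_double_on_curve[of b w "b/(2*w)"] False
        by simp
    qed (simp add: wadd_opposite)
    ultimately show ?thesis using Q True by (auto simp: wadd_opposite)
  next
    case False
    define v where "v = (y0 - w) / x0"
    have y0: "y0 = w + v*x0" using False by (simp add: v_def)
    have "b = 2*w*v + x0*(v^2 - (a + x0))"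
      using assms base_line_on_curve[OF False] unfolding Q y0 by blast
    from base_chord_on_curve[OF this refl]
    show ?thesis unfolding Q y0 base_chord_left[OF False] by simp
  qed
qed simp

lemma wadd_closed:
  assumes P: "P \<in> wpoints a b c" and Q: "Q \<in> wpoints a b c"
  shows "wadd a b P Q \<in> wpoints a b c"
proof (cases P)
  case (Some p)
  then obtain h w where Ph: "P = Some (h, w)" by (cases p) auto
  define a' where "a' = a + 3*h"
  define b' where "b' = b + 2*a*h + 3*h^2"
  have c: "h^3 + a*h^2 + b*h + c = w^2" using P Ph by simp
  have "wshift h Q \<in> wpoints a' b' (w^2)"
    using wpoints_wshift[OF Q, of h] unfolding a'_def b'_def c .
  from wadd_base_closed[OF this]
  have "wshift h (wadd a b P Q) \<in> wpoints a' b' (w^2)"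
    using wadd_wshift[of a h b P Q] Ph unfolding a'_def b'_def by simp
  from wpoints_wshift[OF this, of "-h"]
  have "wadd a b P Q \<in> wpoints (a' + 3*(-h)) (b' + 2*a'*(-h) + 3*(-h)^2) ((-h)^3 + a'*(-h)^2 + b'*(-h) + w^2)"
    by simp
  moreover have "a' + 3*(-h) = a" "b' + 2*a'*(-h) + 3*(-h)^2 = b" "(-h)^3 + a'*(-h)^2 + b'*(-h) + w^2 = c"
    unfolding a'_def b'_def c[symmetric] by (simp_all add: algebra_simps power2_eq_square power3_eq_cube)
  ultimately show ?thesis by simp
qed (simp add: Q)

text \<open>When w = 0 the point P has order two and the law says that adding P twice is
  the identity; the curve must be nonsingular at P, i.e. b \<noteq> 0.\<close>

lemma add_two_torsion_twice:
  assumes b: "b \<noteq> 0" and Z: "Z \<in> wpoints a b 0"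
  shows "wadd a b (wadd a b Z (Some (0, 0))) (Some (0, 0)) = Z"
proof (cases Z)
  case (Some z)
  then obtain x0 y0 where Zxy: "Z = Some (x0, y0)" by (cases z) auto
  show ?thesis
  proof (cases "x0 = 0")
    case True
    hence "y0 = 0" using Z Zxy by simp
    thus ?thesis using Zxy True by (simp add: wadd_opposite)
  next
    case x0: False
    define v where "v = y0 / x0"
    define s where "s = v^2 - (a + x0)"
    have y0: "y0 = 0 + v*x0" using x0 by (simp add: v_def)
    have "Some (x0, 0 + v*x0) \<in> wpoints a b (0^2)" using Z Zxy y0 by simp
    hence "b = 2*0*v + x0*(v^2 - (a + x0))" by (rule base_line_on_curve[OF x0, THEN iffD1])
    hence "b = x0 * s" by (simp add: s_def)
    hence s: "s \<noteq> 0" using b by auto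
    have "wadd a b Z (Some (0, 0)) = Some (s, 0 + (-v)*s)"
      unfolding Zxy y0 base_chord[OF x0] s_def[symmetric] by (simp add: algebra_simps)
    moreover have "(-v)^2 - (a + s) = x0" and "-v * (s - x0) - (0 + -v*s) = y0"
      using y0 unfolding s_def by (simp_all add: algebra_simps)
    ultimately show ?thesis using base_chord[OF s, of a b 0 "-v"] Zxy by simp
  qed
qed (simp add: wadd_opposite)

lemma base_opposite_plus_double:
  assumes w: "w \<noteq> 0" and lam: "b = 2*w*lam"
  shows "wadd a b (Some (0, -w)) (Some (lam^2 - a, -lam*(lam^2 - a) - w)) = Some (0, w)"
proof (cases "lam^2 - a = 0")
  case True
  have "-w \<noteq> 0" and "-lam = (3*0^2 + 2*a*0 + b) / (2*(-w))" using w lam by simp_all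
  from wadd_tangent[OF this] show ?thesis using True by simp
next
  case False
  have "-lam = ((-lam*(lam^2 - a) - w) - (-w)) / ((lam^2 - a) - 0)" using False by simp
  from wadd_chord[OF _ this] show ?thesis using False by simp
qed

text \<open>If Z = 2P
  the left-hand side is a tangent computation.\<close>

lemma doubling_assoc_base_tangent:
  fixes a b w lam v x0 y0 s :: rat
  assumes x0: "x0 \<noteq> 0" and y0: "y0 \<noteq> 0" and s: "s \<noteq> 0"
    and lam: "b = 2*w*lam" and x0_lam: "x0 = lam^2 - a" and y0_lam: "y0 = -lam*x0 - w"
    and y0_v: "y0 = w + v*x0" and s_def: "s = v^2 - (a + x0)"
  shows "wadd a b (Some (x0, y0)) (Some (x0, y0)) = wadd a b (Some (s, v*(x0 - s) - y0)) (Some (0, w))"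
proof -
  define ys where "ys = v*(x0 - s) - y0"
  define q where "q = w / x0"
  have ew: "w = q*x0" using x0 by (simp add: q_def)
  have "(v + 2*q + lam) * x0 = 0" using y0_v y0_lam unfolding ew by (simp add: algebra_simps)
  hence ev: "v = -lam - 2*q" using x0 by simp
  have ea: "a = lam^2 - x0" using x0_lam by simp
  have D1: "2*y0 \<noteq> 0" and D2: "0 - s \<noteq> 0" using y0 s by simp_all
  have hx: "(3*x0^2 + 2*a*x0 + b)^2 * (0 - s)^2 - (a + x0 + x0) * (2*y0)^2 * (0 - s)^2
      = (w - ys)^2 * (2*y0)^2 - (a + s + 0) * (2*y0)^2 * (0 - s)^2"
    unfolding ys_def s_def y0_lam lam ea ev ew by (simp add: algebra_simps power2_eq_square power3_eq_cube)
  have hy: "(3*x0^2 + 2*a*x0 + b) * (x0*(2*y0)^2 - (3*x0^2 + 2*a*x0 + b)^2 + (a + x0 + x0)*(2*y0)^2) * (0 - s)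
        - y0*(2*y0)^3*(0 - s)
      = (w - ys) * (s*(2*y0)^2 - (3*x0^2 + 2*a*x0 + b)^2 + (a + x0 + x0)*(2*y0)^2) * (2*y0)
        - ys*(2*y0)^3*(0 - s)"
    unfolding ys_def s_def y0_lam lam ea ev ew by (simp add: algebra_simps power2_eq_square power3_eq_cube)
  from fraction_points_eq[OF D1 D2 hx hy] wadd_tangent[of y0 _ x0 a b, OF y0 refl]
    wadd_chord[of s 0 _ w ys a b, OF s refl]
  show ?thesis unfolding ys_def[symmetric] by (simp only:)
qed

lemma doubling_assoc_base_chord:
  fixes a b w lam v x0 y0 x2 y2 s :: rat
  assumes x0: "x0 \<noteq> 0" and s: "s \<noteq> 0"
    and lam: "b = 2*w*lam" and v: "b = 2*w*v + x0*s" and s_def: "s = v^2 - (a + x0)"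
    and y0_def: "y0 = w + v*x0" and x2_def: "x2 = lam^2 - a" and y2_def: "y2 = -lam*x2 - w"
    and d: "x0 \<noteq> x2"
  shows "wadd a b (Some (x0, y0)) (Some (x2, y2)) = wadd a b (Some (s, v*(x0 - s) - y0)) (Some (0, w))"
proof -
  define ys where "ys = v*(x0 - s) - y0"
  define u where "u = lam - v"
  have wu: "2*w*u = x0*s" using lam v by (simp add: u_def algebra_simps)
  hence u: "u \<noteq> 0" using x0 s by auto
  define z where "z = x0 / (2*u)"
  have ex0: "x0 = 2*u*z" using u by (simp add: z_def)
  have ew: "w = z*s" using wu u ex0 by (simp add: algebra_simps)
  have elam: "lam = v + u" by (simp add: u_def)
  have ea: "a = v^2 - x0 - s" using s_def by simp
  have D1: "x2 - x0 \<noteq> 0" and D2: "0 - s \<noteq> 0" using d s by simp_all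
  have hx: "(y2 - y0)^2 * (0 - s)^2 - (a + x0 + x2) * (x2 - x0)^2 * (0 - s)^2
      = (w - ys)^2 * (x2 - x0)^2 - (a + s + 0) * (x2 - x0)^2 * (0 - s)^2"
    unfolding y2_def x2_def ys_def y0_def ea elam ex0 ew
    by (simp add: algebra_simps power2_eq_square power3_eq_cube)
  have hy: "(y2 - y0) * (x0*(x2 - x0)^2 - (y2 - y0)^2 + (a + x0 + x2)*(x2 - x0)^2) * (0 - s)
        - y0*(x2 - x0)^3*(0 - s)
      = (w - ys) * (s*(x2 - x0)^2 - (y2 - y0)^2 + (a + x0 + x2)*(x2 - x0)^2) * (x2 - x0)
        - ys*(x2 - x0)^3*(0 - s)"
    unfolding y2_def x2_def ys_def y0_def ea elam ex0 ew
    by (simp add: algebra_simps power2_eq_square power3_eq_cube)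
  from fraction_points_eq[OF D1 D2 hx hy] wadd_chord[of x0 x2 _ y2 y0 a b, OF d refl]
    wadd_chord[of s 0 _ w ys a b, OF s refl]
  show ?thesis unfolding ys_def[symmetric] by (simp only:)
qed

text \<open>Generic position s \<noteq> 0, i.e. Z \<noteq> -2P: the three remaining shapes are Z = 2P (tangent),
  Z = -2P (excluded, it forces s = 0), and x(Z) \<noteq> x(2P) (chord).\<close>

lemma doubling_assoc_base_generic:
  fixes a b w lam v x0 y0 s :: rat
  assumes x0: "x0 \<noteq> 0" and s: "s \<noteq> 0"
    and lam: "b = 2*w*lam" and v: "b = 2*w*v + x0*s" and s_def: "s = v^2 - (a + x0)"
    and y0: "y0 = w + v*x0"
  shows "wadd a b (Some (x0, y0)) (Some (lam^2 - a, -lam*(lam^2 - a) - w))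
       = wadd a b (Some (s, v*(x0 - s) - y0)) (Some (0, w))"
proof -
  define x2 where "x2 = lam^2 - a"
  define y2 where "y2 = -lam*x2 - w"
  have lam_v: "lam \<noteq> v"
  proof
    assume "lam = v"
    thus False using lam v x0 s by simp
  qed
  consider "x0 = x2" "y0 = y2" | "x0 = x2" "y0 = -y2" | "x0 \<noteq> x2"
  proof -
    have "Some (x0, y0) \<in> wpoints a b (w^2)" using base_line_on_curve[OF x0] v s_def y0 by simp
    moreover have "Some (x2, y2) \<in> wpoints a b (w^2)"
      unfolding x2_def y2_def by (rule base_double_on_curve[OF lam])
    ultimately have "x0 = x2 \<Longrightarrow> y0^2 = y2^2" by simp
    hence "x0 = x2 \<Longrightarrow> y0 = y2 \<or> y0 = -y2" by (simp add: power2_eq_iff)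
    thus thesis using that by blast
  qed
  thus ?thesis
  proof cases
    case 1
    have y0_ne: "y0 \<noteq> 0"
    proof
      assume "y0 = 0"
      hence "w + v*x0 = 0" and "-lam*x0 - w = 0" using 1 y0 unfolding y2_def by simp_all
      hence "lam * x0 = v * x0" by linarith
      thus False using x0 lam_v by simp
    qed
    have x0_lam: "x0 = lam^2 - a" and y0_lam: "y0 = -lam*x0 - w"
      using 1 unfolding x2_def y2_def by simp_all
    show ?thesis unfolding x0_lam[symmetric] y0_lam[symmetric]
      by (rule doubling_assoc_base_tangent[OF x0 y0_ne s lam x0_lam y0_lam y0 s_def])
  next
    case 2
    hence "(v - lam) * x0 = 0" using y0 unfolding y2_def by (simp add: algebra_simps)
    thus ?thesis using x0 lam_v by simp
  next
    case 3
    show ?thesis unfolding x2_def[symmetric] y2_def[symmetric]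
      by (rule doubling_assoc_base_chord[OF x0 s lam v s_def y0 x2_def y2_def 3])
  qed
qed

text \<open>Special associativity at the base point for an affine Z with x0 \<noteq> 0; the case s = 0
  is Z = -2P, where both sides vanish.\<close>

lemma doubling_assoc_base_affine:
  assumes w: "w \<noteq> 0" and x0: "x0 \<noteq> 0" and Z: "Some (x0, y0) \<in> wpoints a b (w^2)"
  shows "wadd a b (Some (x0, y0)) (wadd a b (Some (0, w)) (Some (0, w)))
       = wadd a b (wadd a b (Some (x0, y0)) (Some (0, w))) (Some (0, w))"
proof -
  define lam where "lam = b / (2*w)"
  define v where "v = (y0 - w) / x0"
  define s where "s = v^2 - (a + x0)"
  have lam: "b = 2*w*lam" using w by (simp add: lam_def)
  have y0: "y0 = w + v*x0" using x0 by (simp add: v_def)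
  have v: "b = 2*w*v + x0*s" using Z base_line_on_curve[OF x0] unfolding y0 s_def by blast
  have ZP: "wadd a b (Some (x0, y0)) (Some (0, w)) = Some (s, v*(x0 - s) - y0)"
    using base_chord[OF x0] unfolding y0 s_def by simp
  show ?thesis
  proof (cases "s = 0")
    case True
    hence "lam = v" using lam v w by simp
    hence "x0 = lam^2 - a" "y0 = -(-lam*(lam^2 - a) - w)" "v*(x0 - s) - y0 = -w"
      using True y0 unfolding s_def by (simp_all add: algebra_simps)
    thus ?thesis unfolding base_double[OF w lam] ZP True by (simp add: wadd_opposite)
  next
    case False
    show ?thesis unfolding base_double[OF w lam] ZP
      by (rule doubling_assoc_base_generic[OF x0 False lam v s_def y0])
  qed
qed

lemma doubling_assoc_base:
  assumes Z: "Z \<in> wpoints a b (w^2)" and nonsing: "w = 0 \<Longrightarrow> b \<noteq> 0"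
  shows "wadd a b Z (wadd a b (Some (0, w)) (Some (0, w)))
       = wadd a b (wadd a b Z (Some (0, w))) (Some (0, w))"
proof (cases Z)
  case (Some z)
  then obtain x0 y0 where Zxy: "Z = Some (x0, y0)" by (cases z) auto
  show ?thesis
  proof (cases "w = 0")
    case True
    have "wadd a b (Some (0, w)) (Some (0, w)) = None" using True by (simp add: wadd_opposite)
    thus ?thesis using add_two_torsion_twice[OF nonsing[OF True], of Z a] Z True by simp
  next
    case w: False
    define lam where "lam = b / (2*w)"
    have lam: "b = 2*w*lam" using w by (simp add: lam_def)
    consider "x0 = 0" "y0 = w" | "x0 = 0" "y0 = -w" | "x0 \<noteq> 0"
      using Z Zxy by (cases "x0 = 0") (auto simp: power2_eq_iff)
    thus ?thesis
    proof cases
      case 1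
      show ?thesis unfolding Zxy 1 base_double[OF w lam]
        using wadd_commute[OF _ base_double_on_curve[OF lam], of 0 w] by simp
    next
      case 2
      show ?thesis unfolding Zxy 2 base_double[OF w lam] base_opposite_plus_double[OF w lam]
        by (simp add: wadd_opposite)
    next
      case 3
      show ?thesis unfolding Zxy using doubling_assoc_base_affine[OF w 3] Z Zxy by simp
    qed
  qed
qed simp

text \<open>Special associativity on an arbitrary Weierstrass curve y^2 = x^3 + a x^2 + b x + c
  whose cubic has no repeated root, obtained by translating P to the base position.\<close>

lemma doubling_assoc:
  assumes nonsing: "\<forall>x. x^3 + a*x^2 + b*x + c = 0 \<longrightarrow> 3*x^2 + 2*a*x + b \<noteq> 0"
    and Z: "Z \<in> wpoints a b c" and P: "P \<in> wpoints a b c"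
  shows "wadd a b Z (wadd a b P P) = wadd a b (wadd a b Z P) P"
proof (cases P)
  case (Some p)
  then obtain h w where Ph: "P = Some (h, w)" by (cases p) auto
  define a' where "a' = a + 3*h"
  define b' where "b' = b + 2*a*h + 3*h^2"
  have c: "h^3 + a*h^2 + b*h + c = w^2" using P Ph by simp
  have Z': "wshift h Z \<in> wpoints a' b' (w^2)"
    using wpoints_wshift[OF Z, of h] unfolding a'_def b'_def c .
  have "w = 0 \<Longrightarrow> b' \<noteq> 0"
  proof -
    assume "w = 0"
    hence "3*h^2 + 2*a*h + b \<noteq> 0" using nonsing c by simp
    thus "b' \<noteq> 0" unfolding b'_def by (simp add: algebra_simps)
  qed
  from doubling_assoc_base[OF Z' this]
  have "wshift h (wadd a b Z (wadd a b P P)) = wshift h (wadd a b (wadd a b Z P) P)"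
    using Ph unfolding a'_def b'_def wadd_wshift[symmetric] by simp
  thus ?thesis by (rule wshift_inj)
qed simp

abbreviation coefA :: "int \<Rightarrow> int \<Rightarrow> rat" where "coefA m n \<equiv> of_int (m + n)"
abbreviation coefB :: "int \<Rightarrow> int \<Rightarrow> rat" where "coefB m n \<equiv> of_int (m * n)"

lemma ec_add_eq_wadd: "ec_add m n = wadd (coefA m n) (coefB m n)"
  unfolding ec_add_def wadd_def Let_def by (intro ext) simp

lemma E_carrier: "carrier (E_group m n) = wpoints (coefA m n) (coefB m n) 0"
proof -
  have "x * (x + of_int m) * (x + of_int n) = x^3 + coefA m n * x^2 + coefB m n * x + 0" for x :: rat
    by (simp add: algebra_simps power2_eq_square power3_eq_cube)
  hence "{P. on_curve m n P} = {(x, y). y^2 = x^3 + coefA m n * x^2 + coefB m n * x + 0}"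
    by (auto simp: on_curve_def simp del: of_int_add of_int_mult)
  thus ?thesis by (simp add: E_group_def wpoints_def)
qed

lemma E_mult: "monoid.mult (E_group m n) = wadd (coefA m n) (coefB m n)"
  by (simp add: E_group_def ec_add_eq_wadd)

lemma E_one: "one (E_group m n) = None"
  by (simp add: E_group_def)

lemma E_pow_Suc:
  "P [^]\<^bsub>E_group m n\<^esub> (Suc k) = wadd (coefA m n) (coefB m n) (P [^]\<^bsub>E_group m n\<^esub> k) P"
  by (simp add: E_mult)

lemma torsion_points_iff:
  "P \<in> torsion_points m n \<longleftrightarrow>
     P \<in> wpoints (coefA m n) (coefB m n) 0 \<and> (\<exists>k::nat. k > 0 \<and> P [^]\<^bsub>E_group m n\<^esub> k = None)"
  by (simp add: torsion_points_def E_carrier E_one)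

lemma E_pow_closed:
  "P \<in> wpoints (coefA m n) (coefB m n) 0 \<Longrightarrow> P [^]\<^bsub>E_group m n\<^esub> (k::nat) \<in> wpoints (coefA m n) (coefB m n) 0"
  by (induction k) (simp_all add: E_pow_Suc wadd_closed E_one del: nat_pow_Suc of_int_add of_int_mult)

lemma E_nonsingular:
  fixes m n :: int
  assumes "m \<noteq> 0" and "n \<noteq> 0" and "m \<noteq> n"
  shows "\<forall>x. x^3 + coefA m n * x^2 + coefB m n * x + 0 = 0 \<longrightarrow> 3*x^2 + 2 * coefA m n * x + coefB m n \<noteq> 0"
proof (intro allI impI)
  fix x :: rat
  define M where "M = (of_int m :: rat)"
  define N where "N = (of_int n :: rat)"
  have M: "M \<noteq> 0" and N: "N \<noteq> 0" and MN: "M \<noteq> N" using assms by (simp_all add: M_def N_def)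
  have A: "coefA m n = M + N" and B: "coefB m n = M * N" by (simp_all add: M_def N_def)
  assume "x^3 + coefA m n * x^2 + coefB m n * x + 0 = 0"
  hence "x * (x + M) * (x + N) = 0" unfolding A B by (simp add: algebra_simps power2_eq_square power3_eq_cube)
  hence "x = 0 \<or> x = -M \<or> x = -N" by (auto simp: add_eq_0_iff)
  moreover have "3*x^2 + 2*(M + N)*x + M*N = (x + M)*(x + N) + x*(x + M) + x*(x + N)"
    by (simp add: algebra_simps power2_eq_square)
  ultimately show "3*x^2 + 2 * coefA m n * x + coefB m n \<noteq> 0"
    unfolding A B using M N MN by (auto simp: algebra_simps)
qed

text \<open>Doubling commutes with taking powers, so the double of a torsion point is torsion;
  this is where the special associativity law is needed.\<close>

lemma pow_of_double:
  assumes nonsing: "\<forall>x. x^3 + coefA m n * x^2 + coefB m n * x + 0 = 0 \<longrightarrow> 3*x^2 + 2 * coefA m n * x + coefB m n \<noteq> 0"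
    and P: "P \<in> wpoints (coefA m n) (coefB m n) 0"
  shows "(wadd (coefA m n) (coefB m n) P P) [^]\<^bsub>E_group m n\<^esub> (i::nat) = P [^]\<^bsub>E_group m n\<^esub> (2*i)"
proof (induction i)
  case (Suc i)
  have "2 * Suc i = Suc (Suc (2*i))" by simp
  thus ?case unfolding E_pow_Suc Suc.IH
    using doubling_assoc[OF nonsing E_pow_closed[OF P] P] by (simp only: E_pow_Suc)
qed (simp add: E_one)

lemma pow_periodic:
  assumes "P [^]\<^bsub>E_group m n\<^esub> (k::nat) = None"
  shows "P [^]\<^bsub>E_group m n\<^esub> (k + j) = P [^]\<^bsub>E_group m n\<^esub> j"
proof (induction j)
  case (Suc j)
  thus ?case by (simp add: E_pow_Suc del: nat_pow_Suc)
qed (use assms in \<open>simp add: E_one\<close>)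

lemma torsion_double:
  assumes nonsing: "\<forall>x. x^3 + coefA m n * x^2 + coefB m n * x + 0 = 0 \<longrightarrow> 3*x^2 + 2 * coefA m n * x + coefB m n \<noteq> 0"
    and P: "P \<in> torsion_points m n"
  shows "wadd (coefA m n) (coefB m n) P P \<in> torsion_points m n"
proof -
  obtain k :: nat where k: "k > 0" "P [^]\<^bsub>E_group m n\<^esub> k = None"
    and Pw: "P \<in> wpoints (coefA m n) (coefB m n) 0"
    using P torsion_points_iff by blast
  have "(wadd (coefA m n) (coefB m n) P P) [^]\<^bsub>E_group m n\<^esub> k = P [^]\<^bsub>E_group m n\<^esub> (k + k)"
    using pow_of_double[OF nonsing Pw, of k] by (simp add: mult_2)
  also have "\<dots> = None" using pow_periodic[OF k(2), of k] k(2) by simp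
  finally show ?thesis using k(1) wadd_closed[OF Pw Pw] torsion_points_iff by blast
qed

lemma torsion_wneg: "P \<in> torsion_points m n \<Longrightarrow> wneg P \<in> torsion_points m n"
proof -
  have "(wneg P) [^]\<^bsub>E_group m n\<^esub> (k::nat) = wneg (P [^]\<^bsub>E_group m n\<^esub> k)" for k
    by (induction k) (simp_all add: E_pow_Suc wadd_wneg E_one del: nat_pow_Suc)
  thus "P \<in> torsion_points m n \<Longrightarrow> wneg P \<in> torsion_points m n"
    unfolding torsion_points_iff using wneg_wpoints by (metis wneg_simps(1))
qed

lemma torsion_None: "None \<in> torsion_points m n"
  unfolding torsion_points_iff by (intro conjI exI[of _ 1]) (simp_all add: E_pow_Suc E_one del: nat_pow_Suc)

lemma iso_facts:
  assumes iso: "\<phi> \<in> iso (E_torsion m n) (integer_mod_group 2 \<times>\<times> integer_mod_group N)" and N: "N > 0"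
  shows "inj_on \<phi> (torsion_points m n)"
    and "\<phi> ` torsion_points m n = {0..<2} \<times> {0..<int N}"
    and "\<And>P Q. P \<in> torsion_points m n \<Longrightarrow> Q \<in> torsion_points m n \<Longrightarrow>
          \<phi> (wadd (coefA m n) (coefB m n) P Q)
            = ((fst (\<phi> P) + fst (\<phi> Q)) mod 2, (snd (\<phi> P) + snd (\<phi> Q)) mod int N)"
proof -
  have hom: "\<phi> \<in> hom (E_torsion m n) (integer_mod_group 2 \<times>\<times> integer_mod_group N)"
    and bij: "bij_betw \<phi> (torsion_points m n) ({0..<2} \<times> {0..<int N})"
    using iso N by (auto simp: iso_def E_torsion_def carrier_integer_mod_group)
  show "inj_on \<phi> (torsion_points m n)" and "\<phi> ` torsion_points m n = {0..<2} \<times> {0..<int N}"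
    using bij by (simp_all add: bij_betw_def)
  fix P Q assume "P \<in> torsion_points m n" "Q \<in> torsion_points m n"
  hence "\<phi> (monoid.mult (E_torsion m n) P Q)
      = monoid.mult (integer_mod_group 2 \<times>\<times> integer_mod_group N) (\<phi> P) (\<phi> Q)"
    using hom by (simp add: hom_def E_torsion_def)
  thus "\<phi> (wadd (coefA m n) (coefB m n) P Q)
      = ((fst (\<phi> P) + fst (\<phi> Q)) mod 2, (snd (\<phi> P) + snd (\<phi> Q)) mod int N)"
    by (simp add: E_torsion_def E_mult mult_DirProd' del: of_int_add of_int_mult)
qed

lemma mod_double_fixed:
  fixes v N :: int
  assumes "0 \<le> v" and "v < N" and "(v + v) mod N = v"
  shows "v = 0"
proof (cases "v + v < N")
  case True
  thus ?thesis using assms by (simp add: mod_pos_pos_trivial)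
next
  case False
  have "(v + v) mod N = (v + v - N) mod N" by (simp add: mod_diff_right_eq[symmetric])
  also have "\<dots> = v + v - N" using False assms by (intro mod_pos_pos_trivial) auto
  finally show ?thesis using assms by simp
qed

lemma iso_None:
  assumes iso: "\<phi> \<in> iso (E_torsion m n) (integer_mod_group 2 \<times>\<times> integer_mod_group N)" and N: "N > 0"
  shows "\<phi> None = (0, 0)"
proof -
  note F = iso_facts[OF iso N]
  obtain u v where uv: "\<phi> None = (u, v)" by (cases "\<phi> None")
  have "\<phi> None \<in> \<phi> ` torsion_points m n" using torsion_None by (rule imageI)
  hence range: "0 \<le> u" "u < 2" "0 \<le> v" "v < int N" unfolding F(2) uv by auto
  have "\<phi> None = \<phi> (wadd (coefA m n) (coefB m n) None None)" by simp
  hence "(u + u) mod 2 = u" "(v + v) mod int N = v"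
    using F(3)[OF torsion_None torsion_None] uv by simp_all
  hence "u = 0" "v = 0" using range mod_double_fixed by blast+
  thus ?thesis using uv by simp
qed

lemma point_halving_two_torsion:
  assumes iso: "\<phi> \<in> iso (E_torsion m n) (integer_mod_group 2 \<times>\<times> integer_mod_group N)" and N: "N > 0"
    and nonsing: "\<forall>x. x^3 + coefA m n * x^2 + coefB m n * x + 0 = 0 \<longrightarrow> 3*x^2 + 2 * coefA m n * x + coefB m n \<noteq> 0"
    and g: "0 \<le> g" "g < int N" and g2: "(2*g) mod int N \<noteq> 0" and g4: "(4*g) mod int N = 0"
  shows "\<exists>x y e. y \<noteq> 0 \<and> Some (x, y) \<in> wpoints (coefA m n) (coefB m n) 0 \<and>
           wadd (coefA m n) (coefB m n) (Some (x, y)) (Some (x, y)) = Some (e, 0)"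
proof -
  note F = iso_facts[OF iso N]
  have zero: "\<phi> None = (0, 0)" by (rule iso_None[OF iso N])
  have "(0, g) \<in> \<phi> ` torsion_points m n" unfolding F(2) using g by simp
  then obtain P where P: "P \<in> torsion_points m n" and phiP: "\<phi> P = (0, g)" by auto
  define Q where "Q = wadd (coefA m n) (coefB m n) P P"
  define R where "R = wadd (coefA m n) (coefB m n) Q Q"
  have Q: "Q \<in> torsion_points m n" unfolding Q_def by (rule torsion_double[OF nonsing P])
  have R: "R \<in> torsion_points m n" unfolding R_def by (rule torsion_double[OF nonsing Q])
  have phiQ: "\<phi> Q = (0, (2*g) mod int N)" unfolding Q_def using F(3)[OF P P] phiP by simp
  have "((2*g) mod int N + (2*g) mod int N) mod int N = (2*g + 2*g) mod int N" by (rule mod_add_eq)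
  also have "2*g + 2*g = 4*g" by simp
  finally have four: "((2*g) mod int N + (2*g) mod int N) mod int N = (4*g) mod int N" .
  have "\<phi> R = ((0 + 0) mod 2, ((2*g) mod int N + (2*g) mod int N) mod int N)"
    unfolding R_def using F(3)[OF Q Q] phiQ by simp
  hence "\<phi> R = \<phi> None" unfolding four g4 zero by simp
  hence R_None: "R = None" by (rule inj_onD[OF F(1) _ R torsion_None])
  have "Q \<noteq> None"
  proof
    assume "Q = None"
    thus False using phiQ zero g2 by simp
  qed
  then obtain e yq where Qe: "Q = Some (e, yq)" by auto
  have "yq = 0"
  proof (rule ccontr)
    assume "yq \<noteq> 0"
    hence "\<not> (e = e \<and> yq = - yq)" by simp
    hence "R \<noteq> None" unfolding R_def Qe wadd_Some by (simp add: Let_def)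
    thus False using R_None by simp
  qed
  have "P \<noteq> None"
  proof
    assume "P = None"
    hence "Q = None" unfolding Q_def by simp
    thus False using \<open>Q \<noteq> None\<close> by simp
  qed
  then obtain x y where Pxy: "P = Some (x, y)" by auto
  have "y \<noteq> 0" using \<open>Q \<noteq> None\<close> unfolding Q_def Pxy by (auto simp: wadd_opposite)
  moreover have "Some (x, y) \<in> wpoints (coefA m n) (coefB m n) 0" using P Pxy torsion_points_iff by blast
  ultimately show ?thesis using Qe \<open>yq = 0\<close> unfolding Q_def Pxy by blast
qed

lemma point_of_order_three:
  assumes iso: "\<phi> \<in> iso (E_torsion m n) (integer_mod_group 2 \<times>\<times> integer_mod_group 6)"
    and nonsing: "\<forall>x. x^3 + coefA m n * x^2 + coefB m n * x + 0 = 0 \<longrightarrow> 3*x^2 + 2 * coefA m n * x + coefB m n \<noteq> 0"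
  shows "\<exists>x y. y \<noteq> 0 \<and> Some (x, y) \<in> wpoints (coefA m n) (coefB m n) 0 \<and>
           wadd (coefA m n) (coefB m n) (Some (x, y)) (Some (x, y)) = Some (x, -y)"
proof -
  have N: "(6::nat) > 0" by simp
  note F = iso_facts[OF iso N]
  have zero: "\<phi> None = (0, 0)" by (rule iso_None[OF iso N])
  have "(0, 2) \<in> \<phi> ` torsion_points m n" unfolding F(2) by simp
  then obtain P where P: "P \<in> torsion_points m n" and phiP: "\<phi> P = (0, 2)" by auto
  define Q where "Q = wadd (coefA m n) (coefB m n) P P"
  have Q: "Q \<in> torsion_points m n" unfolding Q_def by (rule torsion_double[OF nonsing P])
  have phiQ: "\<phi> Q = (0, 4)" unfolding Q_def using F(3)[OF P P] phiP by simp
  have negP: "wneg P \<in> torsion_points m n" by (rule torsion_wneg[OF P])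
  obtain u v where uv: "\<phi> (wneg P) = (u, v)" by (cases "\<phi> (wneg P)")
  have "\<phi> (wneg P) \<in> \<phi> ` torsion_points m n" using negP by (rule imageI)
  hence range: "0 \<le> u" "u < 2" "0 \<le> v" "v < 6" unfolding F(2) uv by auto
  have "(0, 0) = \<phi> (wadd (coefA m n) (coefB m n) P (wneg P))" using zero wadd_wneg_self by simp
  also have "\<dots> = (u mod 2, (2 + v) mod 6)" using F(3)[OF P negP] phiP uv by simp
  finally have "u mod 2 = 0" "(2 + v) mod 6 = 0" by simp_all
  hence "u = 0" "v = 4" using range by presburger+
  hence "\<phi> (wneg P) = \<phi> Q" using uv phiQ by simp
  hence Q_negP: "Q = wneg P" by (rule inj_onD[OF F(1) _ negP Q, symmetric])
  have "P \<noteq> None"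
  proof
    assume "P = None"
    thus False using phiP zero by simp
  qed
  then obtain x y where Pxy: "P = Some (x, y)" by auto
  have "y \<noteq> 0" using Q_negP unfolding Q_def Pxy by (auto simp: wadd_opposite)
  moreover have "Some (x, y) \<in> wpoints (coefA m n) (coefB m n) 0" using P Pxy torsion_points_iff by blast
  ultimately show ?thesis using Q_negP unfolding Q_def Pxy by auto
qed

lemma two_descent:
  fixes x y e1 e2 e3 xd yd :: rat
  assumes y: "y \<noteq> 0" and cu: "y^2 = (x - e1) * (x - e2) * (x - e3)"
    and dbl: "wadd (-(e1 + e2 + e3)) (e1*e2 + e1*e3 + e2*e3) (Some (x, y)) (Some (x, y)) = Some (xd, yd)"
  shows "xd - e1 = (((x - e1)^2 - (e1 - e2)*(e1 - e3)) / (2*y))^2"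
proof -
  define T where "T = 3*x^2 + 2*(-(e1 + e2 + e3))*x + (e1*e2 + e1*e3 + e2*e3)"
  define K where "K = -(e1 + e2 + e3) + x + x"
  define N where "N = (x - e1)^2 - (e1 - e2)*(e1 - e3)"
  have xd: "xd = (T/(2*y))^2 - K"
    using dbl wadd_tangent[OF y refl] unfolding T_def K_def by simp
  have "T^2 - (K + e1) * (4 * ((x - e1)*(x - e2)*(x - e3))) = N^2"
    unfolding T_def K_def N_def by (simp add: algebra_simps power2_eq_square)
  hence key: "T^2 - (K + e1) * (2*y)^2 = N^2" using cu by (simp add: power_mult_distrib)
  have "xd - e1 = (T/(2*y))^2 - (K + e1)" unfolding xd by simp
  also have "\<dots> = (T^2 - (K + e1)*(2*y)^2) / (2*y)^2" using y by (simp add: field_simps power2_eq_square)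
  also have "\<dots> = (N/(2*y))^2" unfolding key by (simp add: power_divide)
  finally show ?thesis unfolding N_def .
qed

lemma E_double_squares:
  fixes m n :: int and x y xd yd :: rat
  assumes y: "y \<noteq> 0" and cu: "y^2 = x^3 + coefA m n * x^2 + coefB m n * x"
    and dbl: "wadd (coefA m n) (coefB m n) (Some (x, y)) (Some (x, y)) = Some (xd, yd)"
  shows "(\<exists>r. xd = r^2) \<and> (\<exists>r. xd + of_int m = r^2) \<and> (\<exists>r. xd + of_int n = r^2)"
proof -
  define M where "M = (of_int m :: rat)"
  define N where "N = (of_int n :: rat)"
  have A: "coefA m n = M + N" and B: "coefB m n = M * N" by (simp_all add: M_def N_def)
  have dbl': "wadd (M + N) (M * N) (Some (x, y)) (Some (x, y)) = Some (xd, yd)" using dbl unfolding A B .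
  have cu': "y^2 = x^3 + (M + N)*x^2 + (M*N)*x" using cu unfolding A B .
  have c1: "y^2 = (x - 0)*(x - (-M))*(x - (-N))" and c2: "y^2 = (x - (-M))*(x - 0)*(x - (-N))"
    and c3: "y^2 = (x - (-N))*(x - 0)*(x - (-M))"
    using cu' by (simp_all add: algebra_simps power2_eq_square power3_eq_cube)
  have p1: "-(0 + -M + -N) = M + N" "0*(-M) + 0*(-N) + (-M)*(-N) = M*N"
    and p2: "-((-M) + 0 + -N) = M + N" "(-M)*0 + (-M)*(-N) + 0*(-N) = M*N"
    and p3: "-((-N) + 0 + -M) = M + N" "(-N)*0 + (-N)*(-M) + 0*(-M) = M*N"
    by (simp_all add: mult.commute)
  have "xd - 0 = (((x - 0)^2 - (0 - (-M))*(0 - (-N))) / (2*y))^2"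
    by (rule two_descent[OF y c1]) (unfold p1, rule dbl')
  moreover have "xd - (-M) = (((x - (-M))^2 - ((-M) - 0)*((-M) - (-N))) / (2*y))^2"
    by (rule two_descent[OF y c2]) (unfold p2, rule dbl')
  moreover have "xd - (-N) = (((x - (-N))^2 - ((-N) - 0)*((-N) - (-M))) / (2*y))^2"
    by (rule two_descent[OF y c3]) (unfold p3, rule dbl')
  ultimately show ?thesis unfolding M_def N_def by auto
qed

lemma order_three_quartic:
  fixes x y A B :: rat
  assumes y: "y \<noteq> 0" and cu: "y^2 = x^3 + A*x^2 + B*x"
    and dbl: "wadd A B (Some (x, y)) (Some (x, y)) = Some (x, yd)"
  shows "3*x^4 + 4*A*x^3 + 6*B*x^2 - B^2 = 0"
proof -
  have "x = ((3*x^2 + 2*A*x + B) / (2*y))^2 - (A + x + x)"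
    using dbl wadd_tangent[OF y refl] by simp
  hence "(3*x^2 + 2*A*x + B)^2 / (2*y)^2 = A + 3*x" by (simp add: power_divide algebra_simps)
  hence "(3*x^2 + 2*A*x + B)^2 = (A + 3*x) * (2*y)^2" using y by (simp add: field_simps)
  hence "(3*x^2 + 2*A*x + B)^2 = (A + 3*x) * (4*(x^3 + A*x^2 + B*x))" using cu by (simp add: power_mult_distrib)
  thus ?thesis by (simp add: algebra_simps power2_eq_square power3_eq_cube) (simp add: power_def algebra_simps)
qed

lemma rat_square_int:
  fixes z :: int and r :: rat
  assumes "of_int z = r^2"
  shows "\<exists>s. z = s^2"
proof -
  obtain a b where qr: "quotient_of r = (a, b)" by (cases "quotient_of r")
  have b: "b > 0" and cop: "coprime a b" and r: "r = of_int a / of_int b"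
    using quotient_of_denom_pos[OF qr] quotient_of_coprime[OF qr] quotient_of_div[OF qr] by auto
  have "of_int z * (of_int b)^2 = (of_int a :: rat)^2" using assms r b by (simp add: power_divide field_simps)
  hence eq: "z * b^2 = a^2" by (metis of_int_eq_iff of_int_mult of_int_power)
  hence "b^2 dvd a^2" by (metis dvd_triv_right)
  hence "b = 1" using cop b by auto
  thus ?thesis using eq by auto
qed

lemma scaled_rat_square_int:
  fixes k :: nat and a t :: int and r :: rat
  assumes "t \<noteq> 0" and "of_nat k * (of_int a / of_int t) = r^2"
  shows "\<exists>z. int k * (a * t) = z^2"
proof -
  have t: "(of_int t :: rat) \<noteq> 0" using assms(1) by simp
  have "of_int (int k * (a * t)) = of_nat k * (of_int a / of_int t * of_int t) * (of_int t :: rat)"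
    using t by simp
  also have "\<dots> = (r * of_int t)^2" unfolding power_mult_distrib assms(2)[symmetric]
    by (simp add: power2_eq_square)
  finally show ?thesis by (rule rat_square_int)
qed

lemma squarefree_prime_dvd_cofactor:
  fixes k l :: nat and z s :: int
  assumes sq: "squarefree k" and l: "Factorial_Ring.prime l" and lk: "l dvd k" and e: "int k * z = s^2"
  shows "int l dvd z"
proof -
  have lp: "Factorial_Ring.prime (int l)" using l by simp
  obtain k' where k': "k = l * k'" using lk by (auto simp: dvd_def)
  have "\<not> l dvd k'"
  proof
    assume "l dvd k'"
    hence "l^2 dvd k" unfolding k' by (simp add: power2_eq_square)
    thus False using sq l unfolding squarefree_def by (metis not_prime_unit)
  qed
  hence nk': "\<not> int l dvd int k'" by simp
  have "int l dvd s^2" using e unfolding k' by (metis dvd_triv_left mult.assoc of_nat_mult)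
  hence "int l dvd s" using lp prime_dvd_power by blast
  then obtain s' where s': "s = int l * s'" by (auto simp: dvd_def)
  have "int l * (int k' * z) = int l * (int l * s'^2)"
    using e unfolding s' k' by (simp add: power2_eq_square algebra_simps)
  hence "int k' * z = int l * s'^2" using l by (simp add: prime_gt_0_nat)
  hence "int l dvd int k' * z" by simp
  thus ?thesis using nk' lp prime_dvd_mult_iff by blast
qed

text \<open>Part (i), arithmetic core: if k p and k (p + q) are squares then every prime of k divides
  p and q, so k = 1.\<close>

lemma squarefree_k_eq_1:
  fixes p q k :: nat and S T :: int
  assumes cop: "coprime p q" and sq: "squarefree k"
    and S: "int k * int p = S^2" and T: "int k * (int p + int q) = T^2"
  shows "k = 1"
proof -
  have "\<not> l dvd k" if l: "Factorial_Ring.prime l" for l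
  proof
    assume lk: "l dvd k"
    have "int l dvd int p" by (rule squarefree_prime_dvd_cofactor[OF sq l lk S])
    moreover have "int l dvd int p + int q" by (rule squarefree_prime_dvd_cofactor[OF sq l lk T])
    ultimately have "l dvd p" "l dvd q" by (simp_all add: dvd_add_right_iff flip: of_nat_add)
    hence "is_unit l" by (intro coprime_common_divisor[OF cop])
    thus False using l by simp
  qed
  moreover have "k \<noteq> 0" using sq by (intro notI) simp
  ultimately show "k = 1" using prime_factor_nat by blast
qed

text \<open>Part (ii), arithmetic core: with t dividing 3, if k s t, k (s - p t) t and k (s + q t) t
  are squares then a prime l \<noteq> 3 of k would divide s, p and q; so 3 is the only possible
  prime factor of k.\<close>

lemma order_three_prime_factor:
  fixes p q k l :: nat and s t z0 z1 z2 :: int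
  assumes cop: "coprime p q" and sq: "squarefree k" and t3: "t dvd 3"
    and l: "Factorial_Ring.prime l" and lk: "l dvd k"
    and z0: "int k * (s * t) = z0^2" and z1: "int k * ((s - int p * t) * t) = z1^2"
    and z2: "int k * ((s + int q * t) * t) = z2^2"
  shows "l = 3"
proof (rule ccontr)
  assume "l \<noteq> 3"
  have "\<not> int l dvd t"
  proof
    assume "int l dvd t"
    hence "int l dvd 3" using t3 by (rule dvd_trans)
    hence "l dvd 3" by (metis int_dvd_int_iff of_nat_numeral)
    moreover have "Factorial_Ring.prime (3::nat)" by simp
    ultimately show False using \<open>l \<noteq> 3\<close> l primes_dvd_imp_eq by blast
  qed
  hence cancel: "int l dvd a" if "int l dvd a * t" for a
    using that l by (simp add: prime_dvd_mult_iff)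
  have ls: "int l dvd s" using squarefree_prime_dvd_cofactor[OF sq l lk z0] by (rule cancel)
  have "int l dvd s - int p * t" using squarefree_prime_dvd_cofactor[OF sq l lk z1] by (rule cancel)
  hence "int l dvd s - (s - int p * t)" using ls by (simp only: dvd_diff)
  hence "int l dvd int p * t" by simp
  hence "int l dvd int p" by (rule cancel)
  moreover have "int l dvd s + int q * t" using squarefree_prime_dvd_cofactor[OF sq l lk z2] by (rule cancel)
  hence "int l dvd (s + int q * t) - s" using ls by (simp only: dvd_diff)
  hence "int l dvd int q * t" by simp
  hence "int l dvd int q" by (rule cancel)
  ultimately have "is_unit l" by (intro coprime_common_divisor[OF cop]) (simp_all only: int_dvd_int_iff)
  thus False using l by simp
qed

lemma squarefree_only_prime_3:
  fixes k :: nat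
  assumes sq: "squarefree k" and only3: "\<And>l. Factorial_Ring.prime l \<Longrightarrow> l dvd k \<Longrightarrow> l = 3"
  shows "k = 1 \<or> k = 3"
proof -
  have k0: "k \<noteq> 0" using sq by (intro notI) simp
  show ?thesis
  proof (cases "3 dvd k")
    case False
    hence "\<not> l dvd k" if "Factorial_Ring.prime l" for l using only3 that by blast
    thus ?thesis using k0 prime_factor_nat by blast
  next
    case True
    then obtain k' where k': "k = 3 * k'" by (auto simp: dvd_def)
    have "\<not> l dvd k'" if l: "Factorial_Ring.prime l" for l
    proof
      assume "l dvd k'"
      hence "l = 3" using only3[OF l] unfolding k' by simp
      hence "3^2 dvd k" using \<open>l dvd k'\<close> unfolding k' by (simp add: power2_eq_square)
      hence "is_unit (3::nat)" using sq unfolding squarefree_def by blast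
      thus False by simp
    qed
    moreover have "k' \<noteq> 0" using k0 k' by simp
    ultimately have "k' = 1" using prime_factor_nat by blast
    thus ?thesis using k' by simp
  qed
qed

text \<open>By two-descent e, e + m
  and e + n are squares; as (e, 0) is 2-torsion, e \<in> {0, -m, -n}, and the signs of m < 0 < n
  force e = -m = p k.  Then p k and (p + q) k are squares.\<close>

lemma k_eq_1_of_halving:
  fixes p q k :: nat and m n :: int and x y e :: rat
  assumes p: "p > 0" and q: "q > 0" and cop: "coprime p q" and sq: "squarefree k"
    and m: "m = - int (p * k)" and n: "n = int (q * k)"
    and y: "y \<noteq> 0" and P: "Some (x, y) \<in> wpoints (coefA m n) (coefB m n) 0"
    and dbl: "wadd (coefA m n) (coefB m n) (Some (x, y)) (Some (x, y)) = Some (e, 0)"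
  shows "k = 1"
proof -
  have k: "k > 0" using sq by (cases k) auto
  obtain r0 r1 r2 where s0: "e = r0^2" and s1: "e + of_int m = r1^2" and s2: "e + of_int n = r2^2"
    using E_double_squares[OF y _ dbl] P by auto
  have mk: "of_int m = -(of_nat p * of_nat k :: rat)" and nk: "of_int n = (of_nat q * of_nat k :: rat)"
    using m n by simp_all
  have pos: "(of_nat p * of_nat k :: rat) > 0" "(of_nat q * of_nat k :: rat) > 0" using p q k by simp_all
  have "Some (e, 0) \<in> wpoints (coefA m n) (coefB m n) 0" using wadd_closed[OF P P] dbl by simp
  hence "e * (e + of_int m) * (e + of_int n) = 0"
    by (simp add: algebra_simps power2_eq_square power3_eq_cube)
  moreover have "e \<noteq> 0"
  proof
    assume "e = 0"
    hence "r1^2 = -(of_nat p * of_nat k)" using s1 mk by simp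
    thus False using pos(1) zero_le_power2[of r1] by linarith
  qed
  moreover have "e + of_int n \<noteq> 0"
  proof
    assume "e + of_int n = 0"
    hence "r0^2 = -(of_nat q * of_nat k)" using s0 nk by simp
    thus False using pos(2) zero_le_power2[of r0] by linarith
  qed
  ultimately have e: "e = of_nat p * of_nat k" using mk by simp
  obtain S where S: "int (p * k) = S^2" using rat_square_int[of "int (p * k)" r0] s0 e by auto
  obtain T where T: "int ((p + q) * k) = T^2"
    using rat_square_int[of "int ((p + q) * k)" r2] s2 e nk by (auto simp: algebra_simps)
  show ?thesis
    by (rule squarefree_k_eq_1[OF cop sq, of S T]) (use S T in \<open>simp_all add: algebra_simps\<close>)
qed

text \<open>Part (ii), rational root test: a point of order three has x = k s/t (lowest terms) where
  u = s/t is a root of 3u^4 + 4(q - p)u^3 - 6pq u^2 - p^2 q^2, so t divides 3.\<close>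

lemma order_three_denominator:
  fixes p q k :: nat and m n :: int and x :: rat and s t :: int
  assumes k: "k > 0" and t: "t > 0" and cop: "coprime s t"
    and m: "m = - int (p * k)" and n: "n = int (q * k)"
    and x: "x = of_nat k * (of_int s / of_int t)"
    and quartic: "3*x^4 + 4 * coefA m n * x^3 + 6 * coefB m n * x^2 - (coefB m n)^2 = 0"
  shows "t dvd 3"
proof -
  define P where "P = (of_nat p :: rat)"
  define Q where "Q = (of_nat q :: rat)"
  define K where "K = (of_nat k :: rat)"
  define S where "S = (of_int s :: rat)"
  define T where "T = (of_int t :: rat)"
  have K0: "K \<noteq> 0" and T0: "T \<noteq> 0" using k t by (simp_all add: K_def T_def)
  have A: "coefA m n = (Q - P) * K" and B: "coefB m n = -(P * Q * K^2)"
    using m n by (simp_all add: P_def Q_def K_def algebra_simps power2_eq_square)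
  have "T^4 * (3*x^4 + 4 * coefA m n * x^3 + 6 * coefB m n * x^2 - (coefB m n)^2)
      = K^4 * (3*S^4 + 4*(Q - P)*S^3*T - 6*P*Q*S^2*T^2 - P^2*Q^2*T^4)"
    unfolding x A B S_def[symmetric] T_def[symmetric] K_def[symmetric] using T0
    by (simp add: field_simps power2_eq_square power3_eq_cube power4_eq_xxxx)
  hence "3*S^4 + 4*(Q - P)*S^3*T - 6*P*Q*S^2*T^2 - P^2*Q^2*T^4 = 0" using quartic K0 by simp
  hence "of_int (3*s^4 + 4*(int q - int p)*s^3*t - 6*int p*int q*s^2*t^2 - (int p)^2*(int q)^2*t^4) = (0::rat)"
    by (simp add: S_def T_def P_def Q_def)
  hence "3*s^4 + 4*(int q - int p)*s^3*t - 6*int p*int q*s^2*t^2 - (int p)^2*(int q)^2*t^4 = 0"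
    by (simp only: of_int_eq_0_iff)
  hence "3*s^4 = t * ((int p)^2*(int q)^2*t^3 + 6*int p*int q*s^2*t - 4*(int q - int p)*s^3)"
    by (simp add: algebra_simps power2_eq_square power3_eq_cube power4_eq_xxxx)
  hence "t dvd 3 * s^4" by (metis dvd_triv_left)
  moreover have "coprime t (s^4)" using cop by (simp add: coprime_commute)
  ultimately show "t dvd 3" by (simp add: coprime_dvd_mult_left_iff)
qed

text \<open>Since P = 2(-P), two-descent makes
  x, x + m, x + n squares; writing x = k s/t with t | 3 these become the integer squares of
  the arithmetic core lemma.\<close>

lemma k_eq_1_or_3_of_order_three:
  fixes p q k :: nat and m n :: int and x y :: rat
  assumes cop: "coprime p q" and sq: "squarefree k"
    and m: "m = - int (p * k)" and n: "n = int (q * k)"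
    and y: "y \<noteq> 0" and P: "Some (x, y) \<in> wpoints (coefA m n) (coefB m n) 0"
    and dbl: "wadd (coefA m n) (coefB m n) (Some (x, y)) (Some (x, y)) = Some (x, -y)"
  shows "k = 1 \<or> k = 3"
proof -
  have k: "k > 0" using sq by (cases k) auto
  have cu: "y^2 = x^3 + coefA m n * x^2 + coefB m n * x" using P by simp
  have quartic: "3*x^4 + 4 * coefA m n * x^3 + 6 * coefB m n * x^2 - (coefB m n)^2 = 0"
    by (rule order_three_quartic[OF y cu dbl])
  have "wadd (coefA m n) (coefB m n) (Some (x, -y)) (Some (x, -y)) = Some (x, y)"
    using wadd_wneg[of "coefA m n" "coefB m n" "Some (x, y)" "Some (x, y)"] dbl by simp
  then obtain r0 r1 r2 where r0: "x = r0^2" and r1: "x + of_int m = r1^2" and r2: "x + of_int n = r2^2"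
    using E_double_squares[of "-y" x m n x y] y cu by auto
  obtain s t where st: "quotient_of (x / of_nat k) = (s, t)" by (cases "quotient_of (x / of_nat k)")
  have t: "t > 0" and cop_st: "coprime s t" and "x / of_nat k = of_int s / of_int t"
    using quotient_of_denom_pos[OF st] quotient_of_coprime[OF st] quotient_of_div[OF st] by auto
  hence x: "x = of_nat k * (of_int s / of_int t)" using k by (simp add: field_simps)
  have t3: "t dvd 3" by (rule order_three_denominator[OF k t cop_st m n x quartic])
  have "t \<noteq> 0" using t by simp
  have "of_nat k * (of_int s / of_int t) = r0^2" using r0 x by simp
  then obtain z0 where z0: "int k * (s * t) = z0^2" using scaled_rat_square_int[OF \<open>t \<noteq> 0\<close>] by blast
  have "of_nat k * (of_int (s - int p * t) / of_int t) = r1^2"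
    using r1 x m \<open>t \<noteq> 0\<close> by (simp add: field_simps)
  then obtain z1 where z1: "int k * ((s - int p * t) * t) = z1^2" using scaled_rat_square_int[OF \<open>t \<noteq> 0\<close>] by blast
  have "of_nat k * (of_int (s + int q * t) / of_int t) = r2^2"
    using r2 x n \<open>t \<noteq> 0\<close> by (simp add: field_simps)
  then obtain z2 where z2: "int k * ((s + int q * t) * t) = z2^2" using scaled_rat_square_int[OF \<open>t \<noteq> 0\<close>] by blast
  show ?thesis by (rule squarefree_only_prime_3[OF sq order_three_prime_factor[OF cop sq t3 _ _ z0 z1 z2]])
qed

theorem theorem3p3:
  fixes p q k :: nat and m n :: int
  assumes "p > 0" and "q > 0" and "coprime p q" and "squarefree k"
    and "m = - int (p * k)" and "n = int (q * k)"
  shows "(E_torsion m n \<cong> integer_mod_group 2 \<times>\<times> integer_mod_group 4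
            \<or> E_torsion m n \<cong> integer_mod_group 2 \<times>\<times> integer_mod_group 8 \<longrightarrow> k = 1)
       \<and> (E_torsion m n \<cong> integer_mod_group 2 \<times>\<times> integer_mod_group 6 \<longrightarrow> k = 1 \<or> k = 3)"
proof -
  have "k > 0" using assms(4) by (cases k) auto
  hence "m < 0" "n > 0" using assms(1,2,5,6) by simp_all
  hence "m \<noteq> 0" "n \<noteq> 0" "m \<noteq> n" by simp_all
  note nonsing = E_nonsingular[OF this]
  have part1: "k = 1" if "\<phi> \<in> iso (E_torsion m n) (integer_mod_group 2 \<times>\<times> integer_mod_group N)"
    and "N > 0" "0 \<le> g" "g < int N" "(2*g) mod int N \<noteq> 0" "(4*g) mod int N = 0" for \<phi> N g
    using point_halving_two_torsion[OF that(1,2) nonsing that(3-6)] k_eq_1_of_halving[OF assms] by blast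
  have part2: "k = 1 \<or> k = 3" if "\<phi> \<in> iso (E_torsion m n) (integer_mod_group 2 \<times>\<times> integer_mod_group 6)" for \<phi>
    using point_of_order_three[OF that nonsing] k_eq_1_or_3_of_order_three[OF assms(3-6)] by blast
  show ?thesis
    unfolding is_iso_def using part1[of _ 4 1] part1[of _ 8 2] part2 by auto
qed

end
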